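(* In any $\{K_3,K_4\}$-decomposition of $K_{18}$ with $\alpha=11$, every vertex $x$ of $K_{18}$ satisfies $\alpha_x\in\{1,4\}$.
   Context: A $\{K_3,K_4\}$-decomposition of $K_v$ is a collection of subgraphs, each isomorphic to $K_3$ or $K_4$ (triples and quadruples), such that every edge of $K_v$ lies in exactly one of them. $\alpha$ is the number of copies of $K_3$ in the decomposition, and for a vertex $x$, $\alpha_x$ is the number of copies of $K_3$ in the decomposition containing $x$. *)

theory Defs
  imports Main
begin

definition K34_decomposition :: "'a set \<Rightarrow> 'a set set \<Rightarrow> bool" where
  "K34_decomposition V D \<longleftrightarrow>
     finite V \<and>
     (\<forall>B\<in>D. B \<subseteq> V \<and> (card B = 3 \<or> card B = 4)) \<and>
     (\<forall>x\<in>V. \<forall>y\<in>V. x \<noteq> y \<longrightarrow> (\<exists>!B. B \<in> D \<and> {x, y} \<subseteq> B))"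

definition alpha :: "'a set set \<Rightarrow> nat" where
  "alpha D = card {B\<in>D. card B = 3}"

definition alpha_at :: "'a set set \<Rightarrow> 'a \<Rightarrow> nat" where
  "alpha_at D x = card {B\<in>D. card B = 3 \<and> x \<in> B}"

end

theory Submission
  imports Defs
begin

text \<open>Counting the 17 edges at a vertex \<open>x\<close> gives \<open>17 = 2 \<alpha>\<^sub>x + 3 \<beta>\<^sub>x\<close>, where
\<open>\<beta>\<^sub>x\<close> is the number of quadruples through \<open>x\<close>; so \<open>\<alpha>\<^sub>x \<in> {1, 4, 7}\<close>. Suppose \<open>\<alpha>\<^sub>x = 7\<close>. Since every triple has three
vertices, the \<open>\<alpha>\<^sub>v\<close> of the other 17 vertices add up to \<open>3 \<cdot> 11 - 7 = 26\<close>;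
as \<open>16 \<cdot> 1 + 7 < 26\<close>, two of them, \<open>u\<close> and \<open>w\<close>, have \<open>\<alpha>\<^sub>u, \<alpha>\<^sub>w \<ge> 4\<close>.
Only one triple contains the edge \<open>xu\<close>, so \<open>u\<close> lies in at least three of the
\<open>11 - 7 = 4\<close> triples avoiding \<open>x\<close>, and so does \<open>w\<close>. Then two of these four
triples contain the edge \<open>uw\<close>, which is impossible.\<close>

lemma K34_decomposition_finite:
  assumes "K34_decomposition V D"
  shows "finite V" "finite D"
proof -
  show "finite V" using assms unfolding K34_decomposition_def by blast
  moreover have "D \<subseteq> Pow V" using assms unfolding K34_decomposition_def by blast
  ultimately show "finite D" by (meson finite_Pow_iff finite_subset)
qed

lemma K34_decomposition_block:
  assumes "K34_decomposition V D" "B \<in> D"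
  shows "B \<subseteq> V" "finite B" "card B = 3 \<or> card B = 4"
  using assms K34_decomposition_finite(1)[OF assms(1)]
  unfolding K34_decomposition_def by (auto intro: finite_subset)

lemma K34_decomposition_unique_block:
  assumes "K34_decomposition V D" "u \<in> V" "w \<in> V" "u \<noteq> w"
    and "B1 \<in> D" "B2 \<in> D" "{u, w} \<subseteq> B1" "{u, w} \<subseteq> B2"
  shows "B1 = B2"
  using assms unfolding K34_decomposition_def by metis

lemma K34_decomposition_card_blocks_through_edge:
  assumes "K34_decomposition V D" "u \<in> V" "w \<in> V" "u \<noteq> w" "T \<subseteq> D"
  shows "card {B\<in>T. u \<in> B \<and> w \<in> B} \<le> 1"
proof -
  have "finite T"
    using K34_decomposition_finite(2)[OF assms(1)] assms(5) by (rule finite_subset[rotated])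
  then have "finite {B\<in>T. u \<in> B \<and> w \<in> B}" by simp
  then show ?thesis
    using K34_decomposition_unique_block[OF assms(1-4)] assms(5)
    by (auto simp: card_le_Suc0_iff_eq)
qed

lemma K34_decomposition_degree:
  assumes dec: "K34_decomposition V D" and x: "x \<in> V"
  shows "card V - 1 = 2 * alpha_at D x + 3 * card {B\<in>D. card B = 4 \<and> x \<in> B}"
proof -
  define Dx where "Dx = {B\<in>D. x \<in> B}"
  have fin_Dx: "finite Dx"
    unfolding Dx_def using K34_decomposition_finite(2)[OF dec] by simp
  have partition: "V - {x} = (\<Union>B\<in>Dx. B - {x})"
  proof
    show "V - {x} \<subseteq> (\<Union>B\<in>Dx. B - {x})"
    proof
      fix y assume y: "y \<in> V - {x}"
      then obtain B where "B \<in> D" "{x, y} \<subseteq> B"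
        using dec x unfolding K34_decomposition_def by (metis DiffE singletonI)
      with y show "y \<in> (\<Union>B\<in>Dx. B - {x})" unfolding Dx_def by auto
    qed
    show "(\<Union>B\<in>Dx. B - {x}) \<subseteq> V - {x}"
      unfolding Dx_def using K34_decomposition_block(1)[OF dec] by blast
  qed
  have disjoint: "(B1 - {x}) \<inter> (B2 - {x}) = {}"
    if "B1 \<in> Dx" "B2 \<in> Dx" "B1 \<noteq> B2" for B1 B2
    using that K34_decomposition_unique_block[OF dec x] K34_decomposition_block(1)[OF dec]
    unfolding Dx_def by blast
  have "card (V - {x}) = (\<Sum>B\<in>Dx. card (B - {x}))"
    unfolding partition
    by (rule card_UN_disjoint[OF fin_Dx])
       (use disjoint K34_decomposition_block(2)[OF dec] in \<open>auto simp: Dx_def\<close>)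
  also have "\<dots> = (\<Sum>B\<in>Dx. if card B = 3 then 2 else 3)"
  proof (rule sum.cong)
    fix B assume "B \<in> Dx"
    then have "B \<in> D" "x \<in> B" unfolding Dx_def by auto
    then show "card (B - {x}) = (if card B = 3 then 2 else 3)"
      using K34_decomposition_block(2,3)[OF dec \<open>B \<in> D\<close>] by auto
  qed simp
  also have "\<dots> = (\<Sum>B\<in>Dx \<inter> {B. card B = 3}. 2) + (\<Sum>B\<in>Dx \<inter> - {B. card B = 3}. 3)"
    by (rule sum.If_cases[OF fin_Dx])
  also have "Dx \<inter> {B. card B = 3} = {B\<in>D. card B = 3 \<and> x \<in> B}"
    unfolding Dx_def by auto
  also have "Dx \<inter> - {B. card B = 3} = {B\<in>D. card B = 4 \<and> x \<in> B}"
    unfolding Dx_def using K34_decomposition_block(3)[OF dec] by force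
  finally show ?thesis
    using x K34_decomposition_finite(1)[OF dec] unfolding alpha_at_def by (simp add: mult.commute)
qed

lemma K34_decomposition_18_alpha_at_cases:
  assumes "card V = 18" "K34_decomposition V D" "x \<in> V"
  shows "alpha_at D x \<in> {1, 4, 7}"
proof -
  obtain b where b: "17 = 2 * alpha_at D x + 3 * b"
    using K34_decomposition_degree[OF assms(2,3)] assms(1) by auto
  then have "b \<le> 5" by linarith
  then have "b \<in> {0, 1, 2, 3, 4, 5}" by auto
  with b show ?thesis by (auto; presburger)
qed

lemma K34_decomposition_sum_alpha_at:
  assumes dec: "K34_decomposition V D"
  shows "(\<Sum>v\<in>V. alpha_at D v) = 3 * alpha D"
proof -
  define T where "T = {B\<in>D. card B = 3}"
  have fin_V: "finite V" and fin_T: "finite T"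
    using K34_decomposition_finite[OF dec] unfolding T_def by auto
  have "alpha_at D v = (\<Sum>B\<in>T. if v \<in> B then 1 else 0)" for v
  proof -
    have "alpha_at D v = card {B\<in>T. v \<in> B}"
      unfolding alpha_at_def T_def by (rule arg_cong[where f = card]) auto
    also have "\<dots> = (\<Sum>B\<in>T. if v \<in> B then 1 else 0)"
      by (simp add: sum.inter_filter[OF fin_T, symmetric])
    finally show ?thesis .
  qed
  then have "(\<Sum>v\<in>V. alpha_at D v) = (\<Sum>v\<in>V. \<Sum>B\<in>T. if v \<in> B then 1 else 0)"
    by simp
  also have "\<dots> = (\<Sum>B\<in>T. \<Sum>v\<in>V. if v \<in> B then 1 else 0)"
    by (rule sum.swap)
  also have "\<dots> = (\<Sum>B\<in>T. 3)"
  proof (rule sum.cong)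
    fix B assume "B \<in> T"
    then have "B \<subseteq> V" "card B = 3"
      unfolding T_def using K34_decomposition_block[OF dec] by auto
    moreover from \<open>B \<subseteq> V\<close> have "{v\<in>V. v \<in> B} = B" by auto
    ultimately show "(\<Sum>v\<in>V. if v \<in> B then 1 else 0) = (3::nat)"
      by (simp add: sum.inter_filter[OF fin_V, symmetric])
  qed simp
  finally show ?thesis unfolding alpha_def T_def by simp
qed

lemma alpha_eq_alpha_at_plus_avoiding:
  assumes "finite D"
  shows "alpha D = alpha_at D x + card {B\<in>D. card B = 3 \<and> x \<notin> B}"
proof -
  have "{B\<in>D. card B = 3} = {B\<in>D. card B = 3 \<and> x \<in> B} \<union> {B\<in>D. card B = 3 \<and> x \<notin> B}"
    by blast
  then show ?thesis
    unfolding alpha_def alpha_at_def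
    using assms by (simp add: card_Un_disjoint disjoint_iff)
qed

text \<open>Of the triples through \<open>u\<close>, at most one contains \<open>x\<close>: the one through
the edge \<open>xu\<close>.\<close>
lemma alpha_at_le_card_avoiding:
  assumes dec: "K34_decomposition V D" and "u \<in> V" "x \<in> V" "u \<noteq> x"
  shows "alpha_at D u \<le> card {B\<in>{B\<in>D. card B = 3 \<and> x \<notin> B}. u \<in> B} + 1"
proof -
  let ?A = "{B\<in>{B\<in>D. card B = 3 \<and> x \<notin> B}. u \<in> B}"
  let ?E = "{B\<in>D. u \<in> B \<and> x \<in> B}"
  have "finite (?A \<union> ?E)" using K34_decomposition_finite(2)[OF dec] by simp
  moreover have "{B\<in>D. card B = 3 \<and> u \<in> B} \<subseteq> ?A \<union> ?E" by blast
  ultimately have "alpha_at D u \<le> card (?A \<union> ?E)"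
    unfolding alpha_at_def by (rule card_mono)
  also have "\<dots> \<le> card ?A + card ?E" by (rule card_Un_le)
  finally show ?thesis
    using K34_decomposition_card_blocks_through_edge[OF dec assms(2-4) order_refl] by linarith
qed

lemma K34_decomposition_blocks_through_two_vertices:
  assumes dec: "K34_decomposition V D" and "u \<in> V" "w \<in> V" "u \<noteq> w" "T \<subseteq> D"
  shows "card {B\<in>T. u \<in> B} + card {B\<in>T. w \<in> B} \<le> card T + 1"
proof -
  have fin_T: "finite T"
    using K34_decomposition_finite(2)[OF dec] assms(5) by (rule finite_subset[rotated])
  have "card {B\<in>T. u \<in> B} + card {B\<in>T. w \<in> B}
        = card ({B\<in>T. u \<in> B} \<union> {B\<in>T. w \<in> B}) + card ({B\<in>T. u \<in> B} \<inter> {B\<in>T. w \<in> B})"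
    using fin_T by (intro card_Un_Int) simp_all
  also have "{B\<in>T. u \<in> B} \<inter> {B\<in>T. w \<in> B} = {B\<in>T. u \<in> B \<and> w \<in> B}" by blast
  also have "card ({B\<in>T. u \<in> B} \<union> {B\<in>T. w \<in> B}) \<le> card T"
    using fin_T by (intro card_mono) auto
  finally show ?thesis
    using K34_decomposition_card_blocks_through_edge[OF assms] by linarith
qed

lemma sum_le_card_plus_heavy:
  fixes f :: "'a \<Rightarrow> nat"
  assumes "finite A" "\<forall>v\<in>A. f v \<in> {1, 4, 7}"
  shows "sum f A \<le> card A + 6 * card {v\<in>A. 4 \<le> f v}"
proof -
  have "sum f A \<le> (\<Sum>v\<in>A. 1 + (if 4 \<le> f v then 6 else 0))"
    by (rule sum_mono) (use assms(2) in auto)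
  also have "\<dots> = card A + (\<Sum>v\<in>{v\<in>A. 4 \<le> f v}. 6)"
    by (simp only: sum.distrib card_eq_sum sum.inter_filter[OF assms(1)])
  also have "\<dots> = card A + 6 * card {v\<in>A. 4 \<le> f v}"
    by simp
  finally show ?thesis .
qed

lemma K34_decomposition_18_two_heavy_vertices:
  assumes card_V: "card V = 18" and dec: "K34_decomposition V D"
    and alpha: "alpha D = 11" and x: "x \<in> V" "alpha_at D x = 7"
  obtains u w where "u \<in> V - {x}" "w \<in> V - {x}" "u \<noteq> w"
    "4 \<le> alpha_at D u" "4 \<le> alpha_at D w"
proof -
  let ?H = "{v\<in>V - {x}. 4 \<le> alpha_at D v}"
  have fin_V: "finite V" using K34_decomposition_finite(1)[OF dec] .
  have "33 = alpha_at D x + (\<Sum>v\<in>V - {x}. alpha_at D v)"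
    using K34_decomposition_sum_alpha_at[OF dec] sum.remove[OF fin_V x(1), of "alpha_at D"]
      alpha by linarith
  moreover have "\<forall>v\<in>V - {x}. alpha_at D v \<in> {1, 4, 7}"
    using K34_decomposition_18_alpha_at_cases[OF card_V dec] by blast
  then have "(\<Sum>v\<in>V - {x}. alpha_at D v) \<le> card (V - {x}) + 6 * card ?H"
    using fin_V by (intro sum_le_card_plus_heavy) simp_all
  moreover have "card (V - {x}) = 17" using card_V fin_V x(1) by simp
  ultimately have "\<not> card ?H \<le> Suc 0" using x(2) by linarith
  then obtain u w where "u \<in> ?H" "w \<in> ?H" "u \<noteq> w"
    using card_le_Suc0_iff_eq[of ?H] fin_V by auto
  then show ?thesis using that by blast
qed

theorem mainTheorem6:
  fixes V :: "'a set" and D :: "'a set set"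
  assumes "card V = 18"
    and "K34_decomposition V D"
    and "alpha D = 11"
  shows "\<forall>x\<in>V. alpha_at D x \<in> {1, 4}"
proof
  fix x assume x: "x \<in> V"
  have "alpha_at D x \<noteq> 7"
  proof
    assume x7: "alpha_at D x = 7"
    obtain u w where uw: "u \<in> V - {x}" "w \<in> V - {x}" "u \<noteq> w"
      and heavy: "4 \<le> alpha_at D u" "4 \<le> alpha_at D w"
      using K34_decomposition_18_two_heavy_vertices[OF assms x x7] .
    let ?O = "{B\<in>D. card B = 3 \<and> x \<notin> B}"
    have "card ?O = 4"
      using alpha_eq_alpha_at_plus_avoiding[OF K34_decomposition_finite(2)[OF assms(2)], of x]
        assms(3) x7 by simp
    moreover have "alpha_at D u \<le> card {B\<in>?O. u \<in> B} + 1"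
      and "alpha_at D w \<le> card {B\<in>?O. w \<in> B} + 1"
      using alpha_at_le_card_avoiding[OF assms(2) _ x] uw by auto
    moreover have "card {B\<in>?O. u \<in> B} + card {B\<in>?O. w \<in> B} \<le> card ?O + 1"
      by (rule K34_decomposition_blocks_through_two_vertices[OF assms(2) _ _ uw(3)])
         (use uw in auto)
    ultimately show False using heavy by linarith
  qed
  then show "alpha_at D x \<in> {1, 4}"
    using K34_decomposition_18_alpha_at_cases[OF assms(1,2) x] by auto
qed

end
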